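(* Let $(X,d)$ be a complete separable metric space without isolated points and let $f\colon X\to X$ be a continuous map. Then the following assertions are equivalent: (1) there exists a dense, uniformly Li-Yorke scrambled set in $X$; (2) $f$ is densely uniformly Li-Yorke chaotic; (3) there exists a dense, $\sigma$-Cantor, uniformly Li-Yorke scrambled set in $X$; (4) for every $k\geq 2$, both $\mathrm{Prox}_k(f)$ and $D_k(f)$ are dense in $X^k$.
   Context: A subset $S\subset X$ with at least two points is uniformly Li-Yorke scrambled for $f$ if there exist two sequences $\{p_n\}$, $\{q_n\}$ in $\mathbb{N}$ such that for all $x,y\in S$ with $x\neq y$: $\lim_{n\to\infty} d(f^{p_n}(x),f^{p_n}(y))=0$ and $\lim_{n\to\infty} d(f^{q_n}(x),f^{q_n}(y))=\infty$. The map $f$ is densely uniformly Li-Yorke chaotic if there exists a dense, uncountable, uniformly Li-Yorke scrambled subset of $X$. A Cantor set is a set homeomorphic to the Cantor ternary set; a $\sigma$-Cantor set is a countable union of Cantor sets. For $k\geq 2$, $\mathrm{Prox}_k(f)=\{(x_1,\dots,x_k)\in X^k: \liminf_{n\to\infty}\max_{1\leq i<j\leq k} d(f^n(x_i),f^n(x_j))=0\}$ and $D_k(f)=\{(x_1,\dots,x_k)\in X^k: \limsup_{n\to\infty}\min_{1\leq i<j\leq k} d(f^n(x_i),f^n(x_j))=\infty\}$. *)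

theory Defs
  imports "HOL-Analysis.Analysis" "HOL-Library.Liminf_Limsup"
begin

definition cantor_ternary_set :: "real set" where
  "cantor_ternary_set =
     {x. \<exists>a::nat \<Rightarrow> bool. x = (\<Sum>n. (if a n then 2 else 0) / 3 ^ Suc n)}"

definition cantor_set :: "'a::topological_space set \<Rightarrow> bool" where
  "cantor_set C \<longleftrightarrow> C homeomorphic cantor_ternary_set"

definition sigma_cantor_set :: "'a::topological_space set \<Rightarrow> bool" where
  "sigma_cantor_set S \<longleftrightarrow> (\<exists>C::nat \<Rightarrow> 'a set. (\<forall>n. cantor_set (C n)) \<and> S = (\<Union>n. C n))"

definition unif_LY_scrambled :: "('a::metric_space \<Rightarrow> 'a) \<Rightarrow> 'a set \<Rightarrow> bool" where
  "unif_LY_scrambled f S \<longleftrightarrow>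
     (\<exists>x\<in>S. \<exists>y\<in>S. x \<noteq> y) \<and>
     (\<exists>p q :: nat \<Rightarrow> nat.
        \<forall>x\<in>S. \<forall>y\<in>S. x \<noteq> y \<longrightarrow>
          ((\<lambda>n. dist ((f ^^ p n) x) ((f ^^ p n) y)) \<longlonglongrightarrow> 0) \<and>
          filterlim (\<lambda>n. dist ((f ^^ q n) x) ((f ^^ q n) y)) at_top sequentially)"

definition densely_unif_LY_chaotic :: "('a::metric_space \<Rightarrow> 'a) \<Rightarrow> bool" where
  "densely_unif_LY_chaotic f \<longleftrightarrow>
     (\<exists>S. closure S = UNIV \<and> uncountable S \<and> unif_LY_scrambled f S)"

text \<open>Points of X^k are represented as extensional functions on {..<k}.\<close>
definition Prox :: "nat \<Rightarrow> ('a::metric_space \<Rightarrow> 'a) \<Rightarrow> (nat \<Rightarrow> 'a) set" where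
  "Prox k f = {x \<in> PiE {..<k} (\<lambda>_. UNIV).
     liminf (\<lambda>n. ereal (Max {dist ((f ^^ n) (x i)) ((f ^^ n) (x j)) | i j. i < j \<and> j < k})) = 0}"

definition Dk :: "nat \<Rightarrow> ('a::metric_space \<Rightarrow> 'a) \<Rightarrow> (nat \<Rightarrow> 'a) set" where
  "Dk k f = {x \<in> PiE {..<k} (\<lambda>_. UNIV).
     limsup (\<lambda>n. ereal (Min {dist ((f ^^ n) (x i)) ((f ^^ n) (x j)) | i j. i < j \<and> j < k})) = \<infinity>}"

definition dense_in_power :: "nat \<Rightarrow> (nat \<Rightarrow> 'a::topological_space) set \<Rightarrow> bool" where
  "dense_in_power k A \<longleftrightarrow>
     (product_topology (\<lambda>_. euclidean) {..<k}) closure_of A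
       = topspace (product_topology (\<lambda>_. euclidean) {..<k})"

end

(*
  (1) implies (4): k distinct points of a dense scrambled set, chosen in k given open sets, are
  a tuple in both Prox_k and D_k. The scrambling times must tend to infinity, since orbits of
  two scrambled points never meet (otherwise their distances would stay bounded).

  (4) implies (3) by a Cantor scheme. Fix a countable family of balls such that every nonempty
  open set contains one of them. At stage n every node of the binary trees started so far gets
  two children, and a new tree is started with a root inside the n-th ball of the family. Each
  new node receives a small closed ball inside its parent; density of Prox_k and D_k for the
  number k of new nodes, followed by continuity of the iterates, gives times p_n and q_n at which
  all these balls are 1/n-close and pairwise n-far apart. By completeness every branch of every
  tree determines a point; the points of one tree form a Cantor set, and the union over all
  trees is dense and uniformly scrambled along p and q.

  (3) implies (2) because Cantor sets are uncountable, and (2) implies (1) trivially.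
*)

theory Submission
  imports Defs
begin

section \<open>Proximal and distal tuples, density in powers\<close>

lemma liminf_ereal_eq_0_iff:
  fixes h :: "nat \<Rightarrow> real"
  assumes "\<And>n. 0 \<le> h n"
  shows "liminf (\<lambda>n. ereal (h n)) = 0 \<longleftrightarrow> (\<forall>\<epsilon>>0. \<exists>\<^sub>F n in sequentially. h n < \<epsilon>)"
proof
  assume lim: "liminf (\<lambda>n. ereal (h n)) = 0"
  show "\<forall>\<epsilon>>0. \<exists>\<^sub>F n in sequentially. h n < \<epsilon>"
  proof (intro allI impI)
    fix \<epsilon> :: real assume "\<epsilon> > 0"
    show "\<exists>\<^sub>F n in sequentially. h n < \<epsilon>"
    proof (rule ccontr)
      assume "\<not> ?thesis"
      then have "\<forall>\<^sub>F n in sequentially. ereal \<epsilon> \<le> ereal (h n)"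
        by (simp add: not_frequently not_less)
      then have "ereal \<epsilon> \<le> liminf (\<lambda>n. ereal (h n))"
        by (rule Liminf_bounded)
      with lim \<open>\<epsilon> > 0\<close> show False by simp
    qed
  qed
next
  assume freq: "\<forall>\<epsilon>>0. \<exists>\<^sub>F n in sequentially. h n < \<epsilon>"
  have "liminf (\<lambda>n. ereal (h n)) \<le> 0"
  proof (rule ereal_le_epsilon2)
    fix \<epsilon> :: real assume "\<epsilon> > 0"
    show "liminf (\<lambda>n. ereal (h n)) \<le> 0 + ereal \<epsilon>"
    proof (rule ccontr)
      assume "\<not> ?thesis"
      then have "\<forall>\<^sub>F n in sequentially. ereal \<epsilon> < ereal (h n)"
        by (intro less_LiminfD) simp
      then have "\<forall>\<^sub>F n in sequentially. \<not> h n < \<epsilon>"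
        by (rule eventually_mono) simp
      with freq \<open>\<epsilon> > 0\<close> show False by (simp add: frequently_def)
    qed
  qed
  moreover have "0 \<le> liminf (\<lambda>n. ereal (h n))"
    by (rule Liminf_bounded) (simp add: assms)
  ultimately show "liminf (\<lambda>n. ereal (h n)) = 0" by simp
qed

lemma limsup_ereal_eq_infinity_iff:
  fixes h :: "nat \<Rightarrow> real"
  shows "limsup (\<lambda>n. ereal (h n)) = \<infinity> \<longleftrightarrow> (\<forall>B. \<exists>\<^sub>F n in sequentially. B < h n)"
proof
  assume lim: "limsup (\<lambda>n. ereal (h n)) = \<infinity>"
  show "\<forall>B. \<exists>\<^sub>F n in sequentially. B < h n"
  proof
    fix B
    show "\<exists>\<^sub>F n in sequentially. B < h n"
    proof (rule ccontr)
      assume "\<not> ?thesis"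
      then have "\<forall>\<^sub>F n in sequentially. ereal (h n) \<le> ereal B"
        by (simp add: not_frequently not_less)
      then have "limsup (\<lambda>n. ereal (h n)) \<le> ereal B"
        by (rule Limsup_bounded)
      with lim show False by simp
    qed
  qed
next
  assume freq: "\<forall>B. \<exists>\<^sub>F n in sequentially. B < h n"
  show "limsup (\<lambda>n. ereal (h n)) = \<infinity>"
  proof (rule ereal_top)
    fix B
    show "ereal B \<le> limsup (\<lambda>n. ereal (h n))"
    proof (rule ccontr)
      assume "\<not> ?thesis"
      then have "\<forall>\<^sub>F n in sequentially. ereal (h n) < ereal B"
        by (intro Limsup_lessD) simp
      then have "\<forall>\<^sub>F n in sequentially. \<not> B < h n"
        by (rule eventually_mono) simp
      with freq show False by (simp add: frequently_def)
    qed
  qed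
qed

lemma finite_pair_image: "finite {g i j | i j. i < j \<and> j < (k::nat)}"
proof (rule finite_subset)
  show "{g i j | i j. i < j \<and> j < k} \<subseteq> (\<lambda>(i, j). g i j) ` ({..<k} \<times> {..<k})"
    by auto
qed auto

lemma pair_image_nonempty:
  assumes "2 \<le> k" shows "{g i j | i j. i < j \<and> j < (k::nat)} \<noteq> {}"
proof -
  have "0 < (1::nat)" "1 < k" using assms by auto
  then show ?thesis by blast
qed

lemma all_ordered_pairs_iff:
  assumes "\<And>i j. P i j \<longleftrightarrow> P j i"
  shows "(\<forall>i j. i < j \<and> j < (k::nat) \<longrightarrow> P i j) \<longleftrightarrow> (\<forall>i<k. \<forall>j<k. i \<noteq> j \<longrightarrow> P i j)"
  using assms by (auto simp: neq_iff)

lemma Prox_iff: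
  fixes f :: "'a::metric_space \<Rightarrow> 'a"
  assumes "2 \<le> k"
  shows "x \<in> Prox k f \<longleftrightarrow> x \<in> PiE {..<k} (\<lambda>_. UNIV) \<and>
           (\<forall>\<epsilon>>0. \<exists>\<^sub>F n in sequentially.
              \<forall>i<k. \<forall>j<k. i \<noteq> j \<longrightarrow> dist ((f^^n) (x i)) ((f^^n) (x j)) < \<epsilon>)"
proof -
  define D where "D n = {dist ((f^^n) (x i)) ((f^^n) (x j)) | i j. i < j \<and> j < k}" for n
  have D: "finite (D n)" "D n \<noteq> {}" for n
    unfolding D_def by (simp_all only: finite_pair_image pair_image_nonempty[OF assms] not_False_eq_True)
  have nonneg: "0 \<le> Max (D n)" for n
  proof -
    have "Max (D n) \<in> D n" by (rule Max_in[OF D])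
    then show ?thesis unfolding D_def by auto
  qed
  have less: "Max (D n) < \<epsilon> \<longleftrightarrow>
      (\<forall>i<k. \<forall>j<k. i \<noteq> j \<longrightarrow> dist ((f^^n) (x i)) ((f^^n) (x j)) < \<epsilon>)" for n \<epsilon>
  proof -
    have "Max (D n) < \<epsilon> \<longleftrightarrow> (\<forall>i j. i < j \<and> j < k \<longrightarrow> dist ((f^^n) (x i)) ((f^^n) (x j)) < \<epsilon>)"
      unfolding Max_less_iff[OF D] unfolding D_def by auto
    also have "\<dots> \<longleftrightarrow> (\<forall>i<k. \<forall>j<k. i \<noteq> j \<longrightarrow> dist ((f^^n) (x i)) ((f^^n) (x j)) < \<epsilon>)"
      by (rule all_ordered_pairs_iff) (simp add: dist_commute)
    finally show ?thesis .
  qed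
  show ?thesis
    unfolding Prox_def mem_Collect_eq D_def[symmetric] liminf_ereal_eq_0_iff[OF nonneg] less ..
qed

lemma Dk_iff:
  fixes f :: "'a::metric_space \<Rightarrow> 'a"
  assumes "2 \<le> k"
  shows "x \<in> Dk k f \<longleftrightarrow> x \<in> PiE {..<k} (\<lambda>_. UNIV) \<and>
           (\<forall>B. \<exists>\<^sub>F n in sequentially.
              \<forall>i<k. \<forall>j<k. i \<noteq> j \<longrightarrow> B < dist ((f^^n) (x i)) ((f^^n) (x j)))"
proof -
  define D where "D n = {dist ((f^^n) (x i)) ((f^^n) (x j)) | i j. i < j \<and> j < k}" for n
  have D: "finite (D n)" "D n \<noteq> {}" for n
    unfolding D_def by (simp_all only: finite_pair_image pair_image_nonempty[OF assms] not_False_eq_True)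
  have greater: "B < Min (D n) \<longleftrightarrow>
      (\<forall>i<k. \<forall>j<k. i \<noteq> j \<longrightarrow> B < dist ((f^^n) (x i)) ((f^^n) (x j)))" for n B
  proof -
    have "B < Min (D n) \<longleftrightarrow> (\<forall>i j. i < j \<and> j < k \<longrightarrow> B < dist ((f^^n) (x i)) ((f^^n) (x j)))"
      unfolding Min_gr_iff[OF D] unfolding D_def by auto
    also have "\<dots> \<longleftrightarrow> (\<forall>i<k. \<forall>j<k. i \<noteq> j \<longrightarrow> B < dist ((f^^n) (x i)) ((f^^n) (x j)))"
      by (rule all_ordered_pairs_iff) (simp add: dist_commute)
    finally show ?thesis .
  qed
  show ?thesis
    unfolding Dk_def mem_Collect_eq D_def[symmetric] limsup_ereal_eq_infinity_iff greater ..
qed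

lemma dense_in_power_iff:
  fixes A :: "(nat \<Rightarrow> 'a::topological_space) set"
  assumes "A \<subseteq> PiE {..<k} (\<lambda>_. UNIV)"
  shows "dense_in_power k A \<longleftrightarrow>
           (\<forall>U. (\<forall>i<k. open (U i) \<and> U i \<noteq> {}) \<longrightarrow> (\<exists>y\<in>A. \<forall>i<k. y i \<in> U i))"
  (is "_ \<longleftrightarrow> ?boxes")
proof
  assume "dense_in_power k A"
  then have dense: "A \<inter> T \<noteq> {}"
    if "openin (product_topology (\<lambda>_. euclidean) {..<k}) T" "T \<noteq> {}" for T
    using that unfolding dense_in_power_def dense_intersects_open by blast
  show ?boxes
  proof (intro allI impI)
    fix U :: "nat \<Rightarrow> 'a set" assume U: "\<forall>i<k. open (U i) \<and> U i \<noteq> {}"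
    have "A \<inter> PiE {..<k} U \<noteq> {}"
    proof (rule dense)
      show "openin (product_topology (\<lambda>_. euclidean) {..<k}) (PiE {..<k} U)"
        using U by (simp add: openin_PiE)
      show "PiE {..<k} U \<noteq> {}"
        using U by (simp add: PiE_eq_empty_iff)
    qed
    then show "\<exists>y\<in>A. \<forall>i<k. y i \<in> U i" by (auto simp: PiE_iff)
  qed
next
  assume boxes: ?boxes
  show "dense_in_power k A"
    unfolding dense_in_power_def dense_intersects_open
  proof (intro allI impI)
    fix T :: "(nat \<Rightarrow> 'a) set"
    assume "openin (product_topology (\<lambda>_. euclidean) {..<k}) T \<and> T \<noteq> {}"
    then obtain x where T: "openin (product_topology (\<lambda>_. euclidean) {..<k}) T" "x \<in> T"
      by blast
    then obtain U :: "nat \<Rightarrow> 'a set" where U: "\<forall>i<k. open (U i)" "x \<in> PiE {..<k} U" "PiE {..<k} U \<subseteq> T"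
      unfolding openin_product_topology_alt by (metis lessThan_iff open_openin)
    then obtain y where y: "y \<in> A" "\<forall>i<k. y i \<in> U i"
      using boxes by (metis PiE_mem empty_iff lessThan_iff)
    with assms have "y \<in> PiE {..<k} U" by (auto simp: PiE_iff)
    with y(1) U(3) show "A \<inter> T \<noteq> {}" by blast
  qed
qed

section \<open>Tuples from a dense scrambled set\<close>

lemma filterlim_at_top_of_filterlim_comp:
  fixes g :: "nat \<Rightarrow> real"
  assumes "filterlim (\<lambda>n. g (q n)) at_top sequentially"
  shows "filterlim q at_top sequentially"
  unfolding filterlim_at_top
proof
  fix N
  have "\<forall>\<^sub>F n in sequentially. Max (g ` {..<N}) < g (q n)"
    using assms by (simp add: filterlim_at_top_dense)
  then show "\<forall>\<^sub>F n in sequentially. N \<le> q n"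
  proof (rule eventually_mono)
    fix n assume less: "Max (g ` {..<N}) < g (q n)"
    show "N \<le> q n"
    proof (rule ccontr)
      assume "\<not> N \<le> q n"
      then have "g (q n) \<le> Max (g ` {..<N})" by (intro Max_ge) auto
      with less show False by simp
    qed
  qed
qed

lemma filterlim_at_top_of_tendsto_0_comp:
  fixes g :: "nat \<Rightarrow> real"
  assumes "(\<lambda>n. g (p n)) \<longlonglongrightarrow> 0" and "\<And>m. g m \<noteq> 0"
  shows "filterlim p at_top sequentially"
  unfolding filterlim_at_top
proof
  fix N
  have "open (- g ` {..<N})" "0 \<in> - g ` {..<N}"
    using assms(2) by (auto intro: finite_imp_closed)
  from topological_tendstoD[OF assms(1) this]
  show "\<forall>\<^sub>F n in sequentially. N \<le> p n"
    by (rule eventually_mono) (auto simp: not_le)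
qed

lemma frequently_of_eventually_comp:
  assumes "\<forall>\<^sub>F n in sequentially. P (q n)" and "filterlim q at_top sequentially"
  shows "\<exists>\<^sub>F n in sequentially. P n"
proof (rule ccontr)
  assume "\<not> ?thesis"
  then have "\<forall>\<^sub>F n in sequentially. \<not> P (q n)"
    by (intro eventually_compose_filterlim[OF _ assms(2)]) (simp add: not_frequently)
  with assms(1) have "\<forall>\<^sub>F n in sequentially. False"
    by eventually_elim simp
  then show False by simp
qed

lemma eventually_all_pairs_lessThan:
  fixes k :: nat
  assumes "\<And>i j. i < k \<Longrightarrow> j < k \<Longrightarrow> i \<noteq> j \<Longrightarrow> \<forall>\<^sub>F n in F. P i j n"
  shows "\<forall>\<^sub>F n in F. \<forall>i<k. \<forall>j<k. i \<noteq> j \<longrightarrow> P i j n"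
proof -
  have "\<forall>\<^sub>F n in F. i \<noteq> j \<longrightarrow> P i j n" if "i < k" "j < k" for i j
    using assms[OF that] by (cases "i = j") auto
  then have "\<forall>\<^sub>F n in F. \<forall>i\<in>{..<k}. \<forall>j\<in>{..<k}. i \<noteq> j \<longrightarrow> P i j n"
    by (simp add: eventually_ball_finite_distrib)
  then show ?thesis by (rule eventually_mono) simp
qed

lemma orbits_never_meet_if_dist_to_infinity:
  fixes f :: "'a::metric_space \<Rightarrow> 'a"
  assumes "filterlim (\<lambda>n. dist ((f^^q n) x) ((f^^q n) y)) at_top sequentially"
  shows "(f^^m) x \<noteq> (f^^m) y"
proof
  assume meet: "(f^^m) x = (f^^m) y"
  have "filterlim q at_top sequentially"
    using assms by (rule filterlim_at_top_of_filterlim_comp)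
  then have "\<forall>\<^sub>F n in sequentially. m \<le> q n"
    by (simp add: filterlim_at_top)
  moreover have "\<forall>\<^sub>F n in sequentially. 0 < dist ((f^^q n) x) ((f^^q n) y)"
    using assms unfolding filterlim_at_top_dense by blast
  ultimately have "\<forall>\<^sub>F n in sequentially. False"
  proof (rule eventually_elim2)
    fix n assume "m \<le> q n" "0 < dist ((f^^q n) x) ((f^^q n) y)"
    moreover have "(f^^q n) z = (f^^(q n - m)) ((f^^m) z)" for z
      using \<open>m \<le> q n\<close> by (metis funpow_add le_add_diff_inverse2 o_apply)
    ultimately show False using meet by simp
  qed
  then show False by simp
qed

lemma times_of_LY_pair_unbounded:
  fixes f :: "'a::metric_space \<Rightarrow> 'a"
  assumes close: "(\<lambda>n. dist ((f^^p n) x) ((f^^p n) y)) \<longlonglongrightarrow> 0"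
    and far: "filterlim (\<lambda>n. dist ((f^^q n) x) ((f^^q n) y)) at_top sequentially"
  shows "filterlim p at_top sequentially" "filterlim q at_top sequentially"
proof -
  show "filterlim q at_top sequentially"
    using far by (rule filterlim_at_top_of_filterlim_comp)
  show "filterlim p at_top sequentially"
    using orbits_never_meet_if_dist_to_infinity[OF far]
    by (intro filterlim_at_top_of_tendsto_0_comp[where g="\<lambda>m. dist ((f^^m) x) ((f^^m) y)", OF close])
      simp
qed

lemma tuple_in_Prox:
  fixes f :: "'a::metric_space \<Rightarrow> 'a"
  assumes k: "2 \<le> k" and y: "y \<in> PiE {..<k} (\<lambda>_. UNIV)"
    and close: "\<And>i j. i < k \<Longrightarrow> j < k \<Longrightarrow> i \<noteq> j \<Longrightarrow>
      (\<lambda>n. dist ((f^^p n) (y i)) ((f^^p n) (y j))) \<longlonglongrightarrow> 0"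
    and p: "filterlim p at_top sequentially"
  shows "y \<in> Prox k f"
  unfolding Prox_iff[OF k]
proof (intro conjI allI impI y)
  fix \<epsilon> :: real assume "\<epsilon> > 0"
  have "\<forall>\<^sub>F n in sequentially.
      \<forall>i<k. \<forall>j<k. i \<noteq> j \<longrightarrow> dist ((f^^p n) (y i)) ((f^^p n) (y j)) < \<epsilon>"
    using \<open>\<epsilon> > 0\<close> by (intro eventually_all_pairs_lessThan order_tendstoD(2)[OF close]) auto
  then show "\<exists>\<^sub>F n in sequentially.
      \<forall>i<k. \<forall>j<k. i \<noteq> j \<longrightarrow> dist ((f^^n) (y i)) ((f^^n) (y j)) < \<epsilon>"
    using p by (rule frequently_of_eventually_comp)
qed

lemma tuple_in_Dk:
  fixes f :: "'a::metric_space \<Rightarrow> 'a"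
  assumes k: "2 \<le> k" and y: "y \<in> PiE {..<k} (\<lambda>_. UNIV)"
    and far: "\<And>i j. i < k \<Longrightarrow> j < k \<Longrightarrow> i \<noteq> j \<Longrightarrow>
      filterlim (\<lambda>n. dist ((f^^q n) (y i)) ((f^^q n) (y j))) at_top sequentially"
    and q: "filterlim q at_top sequentially"
  shows "y \<in> Dk k f"
  unfolding Dk_iff[OF k]
proof (intro conjI allI y)
  fix B :: real
  have "\<forall>\<^sub>F n in sequentially.
      \<forall>i<k. \<forall>j<k. i \<noteq> j \<longrightarrow> B < dist ((f^^q n) (y i)) ((f^^q n) (y j))"
    using far by (intro eventually_all_pairs_lessThan) (simp add: filterlim_at_top_dense)
  then show "\<exists>\<^sub>F n in sequentially.
      \<forall>i<k. \<forall>j<k. i \<noteq> j \<longrightarrow> B < dist ((f^^n) (y i)) ((f^^n) (y j))"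
    using q by (rule frequently_of_eventually_comp)
qed

lemma scrambled_tuple_in_Prox_Dk:
  fixes f :: "'a::metric_space \<Rightarrow> 'a"
  assumes scrambled: "unif_LY_scrambled f S" and k: "2 \<le> k"
    and y: "y \<in> PiE {..<k} (\<lambda>_. UNIV)" "inj_on y {..<k}" "y ` {..<k} \<subseteq> S"
  shows "y \<in> Prox k f" "y \<in> Dk k f"
proof -
  obtain p q where pq: "\<forall>u\<in>S. \<forall>v\<in>S. u \<noteq> v \<longrightarrow>
      ((\<lambda>n. dist ((f^^p n) u) ((f^^p n) v)) \<longlonglongrightarrow> 0) \<and>
      filterlim (\<lambda>n. dist ((f^^q n) u) ((f^^q n) v)) at_top sequentially"
    using scrambled unfolding unif_LY_scrambled_def by blast
  have "y i \<noteq> y j" if "i < k" "j < k" "i \<noteq> j" for i j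
    using inj_onD[OF y(2)] that by auto
  moreover have "y i \<in> S" if "i < k" for i
    using y(3) that by auto
  ultimately have close: "(\<lambda>n. dist ((f^^p n) (y i)) ((f^^p n) (y j))) \<longlonglongrightarrow> 0"
    and far: "filterlim (\<lambda>n. dist ((f^^q n) (y i)) ((f^^q n) (y j))) at_top sequentially"
    if "i < k" "j < k" "i \<noteq> j" for i j
    using pq that by blast+
  have "0 < k" "1 < k" "(0::nat) \<noteq> 1" using k by auto
  note unbounded = times_of_LY_pair_unbounded[OF close[OF this] far[OF this]]
  show "y \<in> Prox k f" by (rule tuple_in_Prox[OF k y(1) close unbounded(1)])
  show "y \<in> Dk k f" by (rule tuple_in_Dk[OF k y(1) far unbounded(2)])
qed

lemma infinite_open_Int_dense:
  fixes S :: "'a::metric_space set"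
  assumes "closure S = UNIV" "\<And>x::'a. x islimpt UNIV" "open U" "U \<noteq> {}"
  shows "infinite (U \<inter> S)"
proof -
  obtain x where "x \<in> U" using assms(4) by blast
  then obtain \<epsilon> where "\<epsilon> > 0" "ball x \<epsilon> \<subseteq> U"
    using assms(3) open_contains_ball by blast
  have "x islimpt S"
    using assms(1,2) limpt_of_closure by metis
  then have "infinite (S \<inter> ball x \<epsilon>)"
    using \<open>\<epsilon> > 0\<close> islimpt_eq_infinite_ball by blast
  then show ?thesis
    using \<open>ball x \<epsilon> \<subseteq> U\<close> by (elim infinite_super[rotated]) blast
qed

lemma exists_inj_on_selection:
  fixes k :: nat
  assumes "\<And>i. i < k \<Longrightarrow> infinite (W i)"
  shows "\<exists>y. inj_on y {..<k} \<and> (\<forall>i<k. y i \<in> W i)"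
  using assms
proof (induction k)
  case 0
  then show ?case by simp
next
  case (Suc k)
  then obtain y where y: "inj_on y {..<k}" "\<forall>i<k. y i \<in> W i" by auto
  have "infinite (W k - y ` {..<k})"
    using Suc.prems[of k] by (simp add: Diff_infinite_finite)
  then obtain z where z: "z \<in> W k" "z \<notin> y ` {..<k}"
    by (metis Diff_iff finite.emptyI ex_in_conv)
  have "inj_on (y(k := z)) {..<Suc k}"
    using y(1) z(2) unfolding inj_on_def by (auto simp: less_Suc_eq)
  moreover have "\<forall>i<Suc k. (y(k := z)) i \<in> W i"
    using y(2) z(1) by (auto simp: less_Suc_eq)
  ultimately show ?case by blast
qed

lemma dense_scrambled_imp_dense_Prox_Dk:
  fixes f :: "'a::metric_space \<Rightarrow> 'a"
  assumes "closure S = UNIV" "unif_LY_scrambled f S" "\<And>x::'a. x islimpt UNIV" "2 \<le> k"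
  shows "dense_in_power k (Prox k f) \<and> dense_in_power k (Dk k f)"
proof -
  have key: "\<exists>y\<in>Prox k f \<inter> Dk k f. \<forall>i<k. y i \<in> U i"
    if U: "\<forall>i<k. open (U i) \<and> U i \<noteq> {}" for U
  proof -
    obtain y where y: "inj_on y {..<k}" "\<forall>i<k. y i \<in> U i \<inter> S"
      using exists_inj_on_selection[of k "\<lambda>i. U i \<inter> S"] U infinite_open_Int_dense[OF assms(1,3)]
      by blast
    have "restrict y {..<k} \<in> PiE {..<k} (\<lambda>_. UNIV)" "inj_on (restrict y {..<k}) {..<k}"
      "restrict y {..<k} ` {..<k} \<subseteq> S"
      using y by (auto simp: inj_on_def)
    note scrambled_tuple_in_Prox_Dk[OF assms(2,4) this]
    with y show ?thesis by (intro bexI[of _ "restrict y {..<k}"]) auto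
  qed
  have "Prox k f \<subseteq> PiE {..<k} (\<lambda>_. UNIV)" "Dk k f \<subseteq> PiE {..<k} (\<lambda>_. UNIV)"
    unfolding Prox_def Dk_def by auto
  moreover have "\<exists>y\<in>Prox k f. \<forall>i<k. y i \<in> U i" "\<exists>y\<in>Dk k f. \<forall>i<k. y i \<in> U i"
    if "\<forall>i<k. open (U i) \<and> U i \<noteq> {}" for U
    using key[OF that] by auto
  ultimately show ?thesis
    by (simp add: dense_in_power_iff)
qed

section \<open>Cantor sets\<close>

text \<open>Continuity of \<open>\<phi>\<close> and of its inverse for the product topology on \<^typ>\<open>nat \<Rightarrow> bool\<close>,
  expressed through initial segments.\<close>
definition cantor_embedding :: "((nat \<Rightarrow> bool) \<Rightarrow> 'a::metric_space) \<Rightarrow> bool" where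
  "cantor_embedding \<phi> \<longleftrightarrow>
     (\<forall>\<epsilon>>0. \<exists>L. \<forall>a b. (\<forall>i<L. a i = b i) \<longrightarrow> dist (\<phi> a) (\<phi> b) < \<epsilon>) \<and>
     (\<forall>a L. \<exists>\<delta>>0. \<forall>b. dist (\<phi> b) (\<phi> a) < \<delta> \<longrightarrow> (\<forall>i<L. a i = b i))"

lemma cantor_embedding_inj:
  assumes "cantor_embedding \<phi>"
  shows "inj \<phi>"
proof (rule injI)
  fix a b assume "\<phi> a = \<phi> b"
  then have agree: "\<forall>i<L. a i = b i" for L
    using assms unfolding cantor_embedding_def by (metis dist_self)
  show "a = b"
  proof
    fix i show "a i = b i" using agree[of "Suc i"] by simp
  qed
qed

lemma continuous_on_cantor_embedding_inv:
  assumes \<phi>: "cantor_embedding \<phi>" and \<psi>: "cantor_embedding \<psi>"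
  shows "continuous_on (range \<phi>) (\<psi> \<circ> inv \<phi>)"
  unfolding continuous_on_iff
proof (intro ballI allI impI)
  fix x and \<epsilon> :: real assume "x \<in> range \<phi>" "\<epsilon> > 0"
  then obtain a where a: "x = \<phi> a" by blast
  obtain L where L: "\<And>a b. (\<forall>i<L. a i = b i) \<Longrightarrow> dist (\<psi> a) (\<psi> b) < \<epsilon>"
    using \<psi>[unfolded cantor_embedding_def, THEN conjunct1, rule_format, OF \<open>\<epsilon> > 0\<close>] by blast
  obtain \<delta> where "\<delta> > 0" and \<delta>: "\<And>b. dist (\<phi> b) (\<phi> a) < \<delta> \<Longrightarrow> \<forall>i<L. a i = b i"
    using \<phi>[unfolded cantor_embedding_def, THEN conjunct2, rule_format, of a L] by blast
  show "\<exists>\<delta>>0. \<forall>x'\<in>range \<phi>. dist x' x < \<delta> \<longrightarrow> dist ((\<psi> \<circ> inv \<phi>) x') ((\<psi> \<circ> inv \<phi>) x) < \<epsilon>"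
  proof (intro exI conjI ballI impI)
    fix x' assume "x' \<in> range \<phi>" "dist x' x < \<delta>"
    then obtain b where b: "x' = \<phi> b" "dist (\<phi> b) (\<phi> a) < \<delta>" using a by blast
    then have "dist (\<psi> b) (\<psi> a) < \<epsilon>"
      using L \<delta> by (metis dist_commute)
    then show "dist ((\<psi> \<circ> inv \<phi>) x') ((\<psi> \<circ> inv \<phi>) x) < \<epsilon>"
      using a b(1) by (simp add: cantor_embedding_inj[OF \<phi>])
  qed (rule \<open>\<delta> > 0\<close>)
qed

lemma homeomorphic_ranges_cantor_embedding:
  assumes \<phi>: "cantor_embedding \<phi>" and \<psi>: "cantor_embedding \<psi>"
  shows "range \<phi> homeomorphic range \<psi>"
  unfolding homeomorphic_def
proof (intro exI homeomorphismI)
  show "continuous_on (range \<phi>) (\<psi> \<circ> inv \<phi>)" "continuous_on (range \<psi>) (\<phi> \<circ> inv \<psi>)"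
    using continuous_on_cantor_embedding_inv assms by blast+
qed (auto simp: inv_f_f cantor_embedding_inj[OF \<phi>] cantor_embedding_inj[OF \<psi>])

definition ternary :: "(nat \<Rightarrow> bool) \<Rightarrow> real" where
  "ternary a = (\<Sum>n. (if a n then 2 else 0) / 3 ^ Suc n)"

lemma cantor_ternary_set_eq_range_ternary: "cantor_ternary_set = range ternary"
  unfolding cantor_ternary_set_def ternary_def by auto

lemma ternary_tail_bound:
  fixes t :: "nat \<Rightarrow> real"
  assumes t: "\<And>n. \<bar>t n\<bar> \<le> 2 / 3 ^ Suc n"
  shows "summable t" "\<bar>\<Sum>n. t (n + l)\<bar> \<le> 1 / 3 ^ l"
proof -
  have "(\<lambda>n. 2 / 3 ^ Suc l * (1 / 3) ^ n) sums (2 / 3 ^ Suc l * (1 / (1 - 1 / 3)) :: real)"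
    by (intro sums_mult geometric_sums) simp
  moreover have "(\<lambda>n. 2 / 3 ^ Suc l * (1 / 3) ^ n) = (\<lambda>n. 2 / 3 ^ Suc (n + l) :: real)"
    by (simp add: power_one_over power_add ac_simps)
  moreover have "2 / 3 ^ Suc l * (1 / (1 - 1 / 3)) = (1 / 3 ^ l :: real)"
    by simp
  ultimately have geometric: "(\<lambda>n. 2 / 3 ^ Suc (n + l)) sums (1 / 3 ^ l :: real)"
    by simp
  have bound: "\<bar>t (n + l)\<bar> \<le> 2 / 3 ^ Suc (n + l)" for n
    by (rule t)
  have abs_summable: "summable (\<lambda>n. \<bar>t (n + l)\<bar>)"
  proof (rule summable_comparison_test'[OF sums_summable[OF geometric], of 0])
    fix n show "norm \<bar>t (n + l)\<bar> \<le> 2 / 3 ^ Suc (n + l)"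
      using bound[of n] by (simp only: real_norm_def abs_abs)
  qed
  then have "summable (\<lambda>n. t (n + l))"
    by (rule summable_rabs_cancel)
  then show "summable t" by simp
  have "\<bar>\<Sum>n. t (n + l)\<bar> \<le> (\<Sum>n. \<bar>t (n + l)\<bar>)"
    by (rule summable_rabs[OF abs_summable])
  also have "\<dots> \<le> (\<Sum>n. 2 / 3 ^ Suc (n + l))"
    using bound abs_summable sums_summable[OF geometric] by (rule suminf_le)
  also have "\<dots> = 1 / 3 ^ l"
    using geometric by (rule sums_unique[symmetric])
  finally show "\<bar>\<Sum>n. t (n + l)\<bar> \<le> 1 / 3 ^ l" .
qed

lemma ternary_diff_bounds:
  assumes agree: "\<forall>i<l. a i = b i"
  shows "\<bar>ternary a - ternary b\<bar> \<le> 1 / 3 ^ l"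
    and "a l \<noteq> b l \<Longrightarrow> 1 / 3 ^ Suc l \<le> \<bar>ternary a - ternary b\<bar>"
proof -
  define t where "t n = ((if a n then 2 else 0) - (if b n then 2 else 0)) / (3::real) ^ Suc n" for n
  have t_bound: "\<bar>t n\<bar> \<le> 2 / 3 ^ Suc n" for n
    unfolding t_def by (auto simp: abs_divide)
  note t_summable = ternary_tail_bound(1)[OF t_bound]
  have digits_summable: "summable (\<lambda>n. (if c n then 2 else 0) / (3::real) ^ Suc n)" for c
    by (rule ternary_tail_bound(1)) (simp add: abs_divide)
  have "ternary a - ternary b = (\<Sum>n. t n)"
    unfolding ternary_def t_def
    by (subst suminf_diff[OF digits_summable digits_summable]) (simp add: diff_divide_distrib)
  also have "\<dots> = (\<Sum>n. t (n + l))"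
    using suminf_split_initial_segment[OF t_summable, of l] agree by (simp add: t_def)
  finally have diff: "ternary a - ternary b = (\<Sum>n. t (n + l))" .
  then show "\<bar>ternary a - ternary b\<bar> \<le> 1 / 3 ^ l"
    using ternary_tail_bound(2)[OF t_bound] by simp
  assume "a l \<noteq> b l"
  then have head: "\<bar>t l\<bar> = 2 / 3 ^ Suc l"
    unfolding t_def by (auto simp: abs_divide)
  define s where "s = (\<Sum>n. t (n + Suc l))"
  have "(\<Sum>n. t (n + l)) = t l + s"
    using suminf_split_head[OF summable_iff_shift[THEN iffD2, OF t_summable, of l]]
    unfolding s_def by simp
  moreover have "\<bar>s\<bar> \<le> 1 / 3 ^ Suc l"
    unfolding s_def by (rule ternary_tail_bound(2)[OF t_bound])
  moreover have "\<bar>t l\<bar> \<le> \<bar>t l + s\<bar> + \<bar>s\<bar>"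
    using abs_triangle_ineq4[of "t l + s" s] by simp
  moreover have "2 / 3 ^ Suc l - 1 / 3 ^ Suc l = (1 / 3 ^ Suc l :: real)"
    by simp
  ultimately show "1 / 3 ^ Suc l \<le> \<bar>ternary a - ternary b\<bar>"
    unfolding diff using head by linarith
qed

lemma cantor_embedding_ternary: "cantor_embedding ternary"
  unfolding cantor_embedding_def
proof (intro conjI allI impI)
  fix \<epsilon> :: real assume "\<epsilon> > 0"
  then obtain L where L: "(1 / 3) ^ L < \<epsilon>"
    using real_arch_pow_inv[of \<epsilon> "1 / 3"] by auto
  show "\<exists>L. \<forall>a b. (\<forall>i<L. a i = b i) \<longrightarrow> dist (ternary a) (ternary b) < \<epsilon>"
  proof (intro exI allI impI)
    fix a b :: "nat \<Rightarrow> bool" assume "\<forall>i<L. a i = b i"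
    then have "\<bar>ternary a - ternary b\<bar> \<le> 1 / 3 ^ L"
      by (rule ternary_diff_bounds(1))
    with L show "dist (ternary a) (ternary b) < \<epsilon>"
      by (simp add: dist_real_def power_one_over)
  qed
next
  fix a and L :: nat
  have "\<forall>i<L. a i = b i" if close: "dist (ternary b) (ternary a) < 1 / 3 ^ L" for b
  proof (rule ccontr)
    assume "\<not> (\<forall>i<L. a i = b i)"
    then obtain l where l: "l < L" "a l \<noteq> b l" "\<forall>m<l. \<not> (m < L \<and> a m \<noteq> b m)"
      using exists_least_iff[of "\<lambda>i. i < L \<and> a i \<noteq> b i"] by blast
    then have "\<forall>i<l. a i = b i" by simp
    then have "1 / 3 ^ Suc l \<le> \<bar>ternary a - ternary b\<bar>"
      using l(2) by (rule ternary_diff_bounds(2))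
    moreover have "(1::real) / 3 ^ L \<le> 1 / 3 ^ Suc l"
      using l(1) by (intro divide_left_mono power_increasing) auto
    ultimately show False
      using close by (simp add: dist_real_def abs_minus_commute)
  qed
  moreover have "(0::real) < 1 / 3 ^ L" by simp
  ultimately show "\<exists>\<delta>>0. \<forall>b. dist (ternary b) (ternary a) < \<delta> \<longrightarrow> (\<forall>i<L. a i = b i)"
    by blast
qed

lemma cantor_set_range_cantor_embedding:
  assumes "cantor_embedding \<phi>"
  shows "cantor_set (range \<phi>)"
  unfolding cantor_set_def cantor_ternary_set_eq_range_ternary
  by (rule homeomorphic_ranges_cantor_embedding[OF assms cantor_embedding_ternary])

lemma uncountable_UNIV_nat_bool: "uncountable (UNIV :: (nat \<Rightarrow> bool) set)"
proof
  assume "countable (UNIV :: (nat \<Rightarrow> bool) set)"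
  then have "range (from_nat_into (UNIV :: (nat \<Rightarrow> bool) set)) = UNIV"
    by (intro range_from_nat_into) auto
  then obtain g :: "nat \<Rightarrow> nat \<Rightarrow> bool" where "range g = UNIV" by blast
  then have "(\<lambda>m. \<not> g m m) \<in> range g" by simp
  then obtain n where "(\<lambda>m. \<not> g m m) = g n" by blast
  from fun_cong[OF this, of n] show False by simp
qed

lemma uncountable_cantor_set:
  assumes "cantor_set C"
  shows "uncountable C"
proof
  assume "countable C"
  obtain h g where "homeomorphism C (range ternary) h g"
    using assms unfolding cantor_set_def cantor_ternary_set_eq_range_ternary homeomorphic_def
    by blast
  then have "range ternary = h ` C" by (simp add: homeomorphism_def)
  with \<open>countable C\<close> have "countable (range ternary)" by simp
  then have "countable (UNIV :: (nat \<Rightarrow> bool) set)"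
    using countable_image_inj_on cantor_embedding_inj[OF cantor_embedding_ternary] by blast
  with uncountable_UNIV_nat_bool show False by simp
qed

section \<open>Families of balls that are close at one time and far apart at another\<close>

lemma continuous_on_funpow:
  fixes f :: "'a::topological_space \<Rightarrow> 'a"
  assumes "continuous_on UNIV f"
  shows "continuous_on UNIV (f ^^ n)"
proof (induction n)
  case 0
  then show ?case by (simp add: continuous_on_id)
next
  case (Suc n)
  then show ?case
    using continuous_on_compose[OF Suc continuous_on_subset[OF assms]] by simp
qed

lemma dense_in_power_finite_index:
  fixes A :: "(nat \<Rightarrow> 'a::topological_space) set"
  assumes dense: "dense_in_power (card I) A" and A: "A \<subseteq> PiE {..<card I} (\<lambda>_. UNIV)"
    and I: "finite I"
    and U: "\<And>i. i \<in> I \<Longrightarrow> open (U i)" "\<And>i. i \<in> I \<Longrightarrow> U i \<noteq> {}"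
  obtains y h where "y \<in> A" "inj_on h I" "h ` I \<subseteq> {..<card I}" "\<And>i. i \<in> I \<Longrightarrow> y (h i) \<in> U i"
proof -
  obtain h where h: "bij_betw h I {..<card I}"
    using ex_bij_betw_finite_nat[OF I] by (auto simp: atLeast0LessThan)
  define g where "g = inv_into I h"
  have g: "g n \<in> I" if "n < card I" for n
    using bij_betw_apply[OF bij_betw_inv_into[OF h]] that unfolding g_def by simp
  have "\<forall>n<card I. open (U (g n)) \<and> U (g n) \<noteq> {}"
    using g U by blast
  then obtain y where y: "y \<in> A" "\<forall>n<card I. y n \<in> U (g n)"
    using dense[unfolded dense_in_power_iff[OF A], rule_format, of "\<lambda>n. U (g n)"] by blast
  have "y (h i) \<in> U i" if "i \<in> I" for i
    using y(2) bij_betwE[OF h] bij_betw_inv_into_left[OF h that] that unfolding g_def by force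
  with y(1) h show ?thesis
    by (intro that[of y h]) (auto simp: bij_betw_def)
qed

lemma exists_proximal_family:
  fixes f :: "'a::metric_space \<Rightarrow> 'a"
  assumes dense: "dense_in_power (card I) (Prox (card I) f)" and I: "2 \<le> card I"
    and U: "\<And>i. i \<in> I \<Longrightarrow> open (U i)" "\<And>i. i \<in> I \<Longrightarrow> U i \<noteq> {}" and "0 < \<epsilon>"
  shows "\<exists>x p. (\<forall>i\<in>I. x i \<in> U i) \<and> (\<forall>i\<in>I. \<forall>j\<in>I. dist ((f^^p) (x i)) ((f^^p) (x j)) < \<epsilon>)"
proof -
  have "finite I" using I by (metis card.infinite not_numeral_le_zero)
  have "Prox (card I) f \<subseteq> PiE {..<card I} (\<lambda>_. UNIV)"
    unfolding Prox_def by auto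
  obtain y h where y: "y \<in> Prox (card I) f" "inj_on h I" "h ` I \<subseteq> {..<card I}"
    "\<And>i. i \<in> I \<Longrightarrow> y (h i) \<in> U i"
    using dense_in_power_finite_index[where U=U, OF dense \<open>_ \<subseteq> _\<close> \<open>finite I\<close> U] by metis
  obtain p where p: "\<forall>n<card I. \<forall>m<card I. n \<noteq> m \<longrightarrow> dist ((f^^p) (y n)) ((f^^p) (y m)) < \<epsilon>"
    using y(1) \<open>0 < \<epsilon>\<close> unfolding Prox_iff[OF I] by (blast dest: frequently_ex)
  have "dist ((f^^p) (y (h i))) ((f^^p) (y (h j))) < \<epsilon>" if "i \<in> I" "j \<in> I" for i j
  proof (cases "i = j")
    case True
    then show ?thesis using \<open>0 < \<epsilon>\<close> by simp
  next
    case False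
    then have "h i \<noteq> h j" using y(2) that by (auto dest: inj_onD)
    with p y(3) that show ?thesis by blast
  qed
  with y(4) show ?thesis by (intro exI[of _ "y \<circ> h"] exI[of _ p]) auto
qed

lemma exists_distal_family:
  fixes f :: "'a::metric_space \<Rightarrow> 'a"
  assumes dense: "dense_in_power (card I) (Dk (card I) f)" and I: "2 \<le> card I"
    and U: "\<And>i. i \<in> I \<Longrightarrow> open (U i)" "\<And>i. i \<in> I \<Longrightarrow> U i \<noteq> {}"
  shows "\<exists>x q. (\<forall>i\<in>I. x i \<in> U i) \<and>
           (\<forall>i\<in>I. \<forall>j\<in>I. i \<noteq> j \<longrightarrow> R < dist ((f^^q) (x i)) ((f^^q) (x j)))"
proof -
  have "finite I" using I by (metis card.infinite not_numeral_le_zero)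
  have "Dk (card I) f \<subseteq> PiE {..<card I} (\<lambda>_. UNIV)"
    unfolding Dk_def by auto
  obtain y h where y: "y \<in> Dk (card I) f" "inj_on h I" "h ` I \<subseteq> {..<card I}"
    "\<And>i. i \<in> I \<Longrightarrow> y (h i) \<in> U i"
    using dense_in_power_finite_index[where U=U, OF dense \<open>_ \<subseteq> _\<close> \<open>finite I\<close> U] by metis
  obtain q where q: "\<forall>n<card I. \<forall>m<card I. n \<noteq> m \<longrightarrow> R < dist ((f^^q) (y n)) ((f^^q) (y m))"
    using y(1) unfolding Dk_iff[OF I] by (blast dest: frequently_ex)
  have "R < dist ((f^^q) (y (h i))) ((f^^q) (y (h j)))" if "i \<in> I" "j \<in> I" "i \<noteq> j" for i j
  proof -
    have "h i \<noteq> h j" using y(2) that by (auto dest: inj_onD)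
    with q y(3) that show ?thesis by blast
  qed
  with y(4) show ?thesis by (intro exI[of _ "y \<circ> h"] exI[of _ q]) auto
qed

lemma exists_proximal_distal_family:
  fixes f :: "'a::metric_space \<Rightarrow> 'a"
  assumes dense: "\<And>k. 2 \<le> k \<Longrightarrow> dense_in_power k (Prox k f) \<and> dense_in_power k (Dk k f)"
    and cont: "continuous_on UNIV f" and I: "2 \<le> card I"
    and U: "\<And>i. i \<in> I \<Longrightarrow> open (U i)" "\<And>i. i \<in> I \<Longrightarrow> U i \<noteq> {}" and "0 < \<epsilon>"
  obtains y p q where "\<And>i. i \<in> I \<Longrightarrow> y i \<in> U i"
    "\<And>i j. i \<in> I \<Longrightarrow> j \<in> I \<Longrightarrow> dist ((f^^p) (y i)) ((f^^p) (y j)) < \<epsilon>"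
    "\<And>i j. i \<in> I \<Longrightarrow> j \<in> I \<Longrightarrow> i \<noteq> j \<Longrightarrow> R < dist ((f^^q) (y i)) ((f^^q) (y j))"
proof -
  obtain z p where z: "\<And>i. i \<in> I \<Longrightarrow> z i \<in> U i"
    and p: "\<And>i j. i \<in> I \<Longrightarrow> j \<in> I \<Longrightarrow> dist ((f^^p) (z i)) ((f^^p) (z j)) < \<epsilon> / 3"
    using exists_proximal_family[where U=U, OF conjunct1[OF dense[OF I]] I U] \<open>0 < \<epsilon>\<close>
    by (metis divide_pos_pos zero_less_numeral)
  define V where "V i = U i \<inter> (f^^p) -` ball ((f^^p) (z i)) (\<epsilon> / 3)" for i
  have V: "open (V i)" "V i \<noteq> {}" if "i \<in> I" for i
  proof -
    show "open (V i)"
      unfolding V_def using U(1)[OF that] continuous_on_funpow[OF cont]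
      by (intro open_Int open_vimage) auto
    have "z i \<in> V i" unfolding V_def using z[OF that] \<open>0 < \<epsilon>\<close> by simp
    then show "V i \<noteq> {}" by blast
  qed
  obtain y q where y: "\<And>i. i \<in> I \<Longrightarrow> y i \<in> V i"
    and q: "\<And>i j. i \<in> I \<Longrightarrow> j \<in> I \<Longrightarrow> i \<noteq> j \<Longrightarrow> R < dist ((f^^q) (y i)) ((f^^q) (y j))"
    using exists_distal_family[where U=V, OF conjunct2[OF dense[OF I]] I V] by metis
  have "y i \<in> U i" if "i \<in> I" for i
    using y[OF that] unfolding V_def by simp
  moreover have "dist ((f^^p) (y i)) ((f^^p) (y j)) < \<epsilon>" if "i \<in> I" "j \<in> I" for i j
    using y[OF that(1)] y[OF that(2)] p[OF that] unfolding V_def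
    using dist_triangle[of "(f^^p) (y i)" "(f^^p) (y j)" "(f^^p) (z i)"]
      dist_triangle[of "(f^^p) (z i)" "(f^^p) (y j)" "(f^^p) (z j)"]
    by (simp add: dist_commute)
  ultimately show ?thesis using q by (rule that)
qed

lemma exists_scrambling_balls:
  fixes f :: "'a::metric_space \<Rightarrow> 'a"
  assumes dense: "\<And>k. 2 \<le> k \<Longrightarrow> dense_in_power k (Prox k f) \<and> dense_in_power k (Dk k f)"
    and cont: "continuous_on UNIV f" and I: "2 \<le> card I"
    and U: "\<And>i. i \<in> I \<Longrightarrow> open (U i)" "\<And>i. i \<in> I \<Longrightarrow> U i \<noteq> {}"
    and "0 < \<epsilon>" "0 < \<delta>"
  obtains r x p q where "\<And>i. i \<in> I \<Longrightarrow> 0 < r i \<and> r i \<le> \<delta>" "\<And>i. i \<in> I \<Longrightarrow> cball (x i) (r i) \<subseteq> U i"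
    "\<And>i j u v. \<lbrakk>i \<in> I; j \<in> I; u \<in> cball (x i) (r i); v \<in> cball (x j) (r j)\<rbrakk> \<Longrightarrow>
       dist ((f^^p) u) ((f^^p) v) < \<epsilon>"
    "\<And>i j u v. \<lbrakk>i \<in> I; j \<in> I; i \<noteq> j; u \<in> cball (x i) (r i); v \<in> cball (x j) (r j)\<rbrakk> \<Longrightarrow>
       R < dist ((f^^q) u) ((f^^q) v)"
proof -
  obtain y p q where y: "\<And>i. i \<in> I \<Longrightarrow> y i \<in> U i"
    and p: "\<And>i j. i \<in> I \<Longrightarrow> j \<in> I \<Longrightarrow> dist ((f^^p) (y i)) ((f^^p) (y j)) < \<epsilon> / 3"
    and q: "\<And>i j. i \<in> I \<Longrightarrow> j \<in> I \<Longrightarrow> i \<noteq> j \<Longrightarrow> R + 2 < dist ((f^^q) (y i)) ((f^^q) (y j))"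
    using exists_proximal_distal_family[where U=U and \<epsilon>="\<epsilon> / 3" and R="R + 2", OF dense cont I U]
      \<open>0 < \<epsilon>\<close> by (metis divide_pos_pos zero_less_numeral)
  define W where "W i = U i \<inter> (f^^p) -` ball ((f^^p) (y i)) (\<epsilon> / 3) \<inter> (f^^q) -` ball ((f^^q) (y i)) 1"
    for i
  have "\<exists>r>0. r \<le> \<delta> \<and> cball (y i) r \<subseteq> W i" if "i \<in> I" for i
  proof -
    have "open (W i)"
      unfolding W_def using U(1)[OF that] continuous_on_funpow[OF cont]
      by (intro open_Int open_vimage) auto
    moreover have "y i \<in> W i" unfolding W_def using y[OF that] \<open>0 < \<epsilon>\<close> by simp
    ultimately obtain r where "0 < r" "cball (y i) r \<subseteq> W i"
      by (auto simp: open_contains_cball)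
    with \<open>0 < \<delta>\<close> show ?thesis
      by (intro exI[of _ "min r \<delta>"]) (auto intro: order_trans[OF subset_cball])
  qed
  then obtain r where r: "\<And>i. i \<in> I \<Longrightarrow> 0 < r i \<and> r i \<le> \<delta> \<and> cball (y i) (r i) \<subseteq> W i"
    by metis
  have near: "u \<in> U i" "dist ((f^^p) u) ((f^^p) (y i)) < \<epsilon> / 3" "dist ((f^^q) u) ((f^^q) (y i)) < 1"
    if "i \<in> I" "u \<in> cball (y i) (r i)" for i u
    using r[OF that(1)] that(2) unfolding W_def by (auto simp: dist_commute)
  show ?thesis
  proof (rule that)
    show "0 < r i \<and> r i \<le> \<delta>" "cball (y i) (r i) \<subseteq> U i" if "i \<in> I" for i
      using r[OF that] near(1)[OF that] by auto
    show "dist ((f^^p) u) ((f^^p) v) < \<epsilon>"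
      if "i \<in> I" "j \<in> I" "u \<in> cball (y i) (r i)" "v \<in> cball (y j) (r j)" for i j u v
      using near(2)[OF that(1,3)] near(2)[OF that(2,4)] p[OF that(1,2)]
        dist_triangle[of "(f^^p) u" "(f^^p) v" "(f^^p) (y i)"]
        dist_triangle[of "(f^^p) (y i)" "(f^^p) v" "(f^^p) (y j)"]
      by (simp add: dist_commute)
    show "R < dist ((f^^q) u) ((f^^q) v)"
      if "i \<in> I" "j \<in> I" "i \<noteq> j" "u \<in> cball (y i) (r i)" "v \<in> cball (y j) (r j)" for i j u v
      using near(3)[OF that(1,4)] near(3)[OF that(2,5)] q[OF that(1-3)]
        dist_triangle[of "(f^^q) (y i)" "(f^^q) (y j)" "(f^^q) u"]
        dist_triangle[of "(f^^q) u" "(f^^q) (y j)" "(f^^q) v"]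
      by (simp add: dist_commute)
  qed
qed

section \<open>Cantor schemes of scrambling balls\<close>

text \<open>An address \<open>(m, s)\<close> is the node \<open>s\<close> of the \<open>m\<close>-th binary tree. That tree is started at
  stage \<open>m\<close>, so the node is built at stage \<open>m + length s\<close>.\<close>
fun level :: "nat \<times> bool list \<Rightarrow> nat" where
  "level (m, s) = m + length s"

locale LY_cantor_scheme =
  fixes f :: "'a::{metric_space, complete_space} \<Rightarrow> 'a"
    and K :: "nat \<times> bool list \<Rightarrow> 'a set"
    and p q :: "nat \<Rightarrow> nat"
  assumes continuous: "continuous_on UNIV f"
    and closed_K: "closed (K a)"
    and K_nonempty: "K a \<noteq> {}"
    and diameter_K: "u \<in> K (m, s) \<Longrightarrow> v \<in> K (m, s) \<Longrightarrow> dist u v \<le> 1 / 2 ^ length s"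
    and K_snoc: "K (m, s @ [t]) \<subseteq> K (m, s)"
    and roots_dense: "open U \<Longrightarrow> U \<noteq> {} \<Longrightarrow> \<exists>m. K (m, []) \<subseteq> U"
    and proximal: "\<lbrakk>level a = Suc n; level b = Suc n; u \<in> K a; v \<in> K b\<rbrakk> \<Longrightarrow>
      dist ((f^^p (Suc n)) u) ((f^^p (Suc n)) v) < inverse (real (Suc n))"
    and distal: "\<lbrakk>level a = Suc n; level b = Suc n; a \<noteq> b; u \<in> K a; v \<in> K b\<rbrakk> \<Longrightarrow>
      real (Suc n) < dist ((f^^q (Suc n)) u) ((f^^q (Suc n)) v)"
begin

lemma K_eventually_small: "0 < \<epsilon> \<Longrightarrow> \<exists>L. \<forall>s. L \<le> length s \<longrightarrow> (\<forall>u\<in>K (m, s). \<forall>v\<in>K (m, s). dist u v < \<epsilon>)"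
proof -
  assume "0 < \<epsilon>"
  then obtain L where L: "(1 / 2) ^ L < \<epsilon>"
    using real_arch_pow_inv[of \<epsilon> "1 / 2"] by auto
  have "dist u v < \<epsilon>" if "L \<le> length s" "u \<in> K (m, s)" "v \<in> K (m, s)" for s u v
  proof -
    have "dist u v \<le> 1 / 2 ^ length s" using diameter_K that(2,3) .
    also have "\<dots> \<le> 1 / 2 ^ L" using that(1) by (intro divide_left_mono power_increasing) auto
    finally show ?thesis using L by (simp add: power_one_over)
  qed
  then show ?thesis by blast
qed

definition point :: "nat \<Rightarrow> (nat \<Rightarrow> bool) \<Rightarrow> 'a" where
  "point m \<alpha> = (SOME x. \<forall>L. x \<in> K (m, map \<alpha> [0..<L]))"

lemma point_mem_K: "point m \<alpha> \<in> K (m, map \<alpha> [0..<L])"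
proof -
  obtain x where "\<And>L. x \<in> K (m, map \<alpha> [0..<L])"
  proof (rule decreasing_closed_nest)
    show "closed (K (m, map \<alpha> [0..<L]))" "K (m, map \<alpha> [0..<L]) \<noteq> {}" for L
      by (rule closed_K, rule K_nonempty)
    show "K (m, map \<alpha> [0..<L']) \<subseteq> K (m, map \<alpha> [0..<L])" if "L \<le> L'" for L L'
      by (rule lift_Suc_antimono_le[of "\<lambda>L. K (m, map \<alpha> [0..<L])", OF _ that]) (simp add: K_snoc)
    show "\<exists>L. \<forall>u\<in>K (m, map \<alpha> [0..<L]). \<forall>v\<in>K (m, map \<alpha> [0..<L]). dist u v < \<epsilon>"
      if "0 < \<epsilon>" for \<epsilon>
      using K_eventually_small[OF that, of m] by (metis length_map length_upt diff_zero order_refl)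
  qed blast
  then have "\<exists>x. \<forall>L. x \<in> K (m, map \<alpha> [0..<L])" by blast
  then show ?thesis
    unfolding point_def by (rule someI_ex[THEN spec])
qed

lemma cantor_embedding_point: "cantor_embedding (point m)"
  unfolding cantor_embedding_def
proof (intro conjI allI impI)
  fix \<epsilon> :: real assume "0 < \<epsilon>"
  then obtain L where L: "\<And>s u v. L \<le> length s \<Longrightarrow> u \<in> K (m, s) \<Longrightarrow> v \<in> K (m, s) \<Longrightarrow> dist u v < \<epsilon>"
    using K_eventually_small by blast
  show "\<exists>L. \<forall>\<alpha> \<beta>. (\<forall>i<L. \<alpha> i = \<beta> i) \<longrightarrow> dist (point m \<alpha>) (point m \<beta>) < \<epsilon>"
  proof (intro exI allI impI)
    fix \<alpha> \<beta> :: "nat \<Rightarrow> bool" assume "\<forall>i<L. \<alpha> i = \<beta> i"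
    then have "map \<alpha> [0..<L] = map \<beta> [0..<L]" by simp
    then have "point m \<beta> \<in> K (m, map \<alpha> [0..<L])"
      using point_mem_K[of m \<beta> L] by (simp only:)
    then show "dist (point m \<alpha>) (point m \<beta>) < \<epsilon>"
      using L[OF _ point_mem_K] by (metis diff_zero length_map length_upt order_refl)
  qed
next
  fix \<alpha> and L :: nat
  define g where "g = f ^^ q (Suc (m + L))"
  have "continuous_on UNIV g"
    unfolding g_def by (rule continuous_on_funpow[OF continuous])
  then obtain \<delta> where "0 < \<delta>" and \<delta>: "\<And>x. dist x (point m \<alpha>) < \<delta> \<Longrightarrow> dist (g x) (g (point m \<alpha>)) < 1"
    unfolding continuous_on_iff by (metis UNIV_I zero_less_one)
  have "\<forall>i<L. \<alpha> i = \<beta> i" if "dist (point m \<beta>) (point m \<alpha>) < \<delta>" for \<beta>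
  proof (rule ccontr)
    assume "\<not> (\<forall>i<L. \<alpha> i = \<beta> i)"
    then have "(m, map \<alpha> [0..<Suc L]) \<noteq> (m, map \<beta> [0..<Suc L])" by auto
    from distal[where n="m + L", OF _ _ this point_mem_K point_mem_K]
    have "real (Suc (m + L)) < dist (g (point m \<alpha>)) (g (point m \<beta>))"
      unfolding g_def by simp
    moreover have "dist (g (point m \<beta>)) (g (point m \<alpha>)) < 1"
      using \<delta> that by blast
    ultimately show False by (simp add: dist_commute)
  qed
  with \<open>0 < \<delta>\<close> show "\<exists>\<delta>>0. \<forall>\<beta>. dist (point m \<beta>) (point m \<alpha>) < \<delta> \<longrightarrow> (\<forall>i<L. \<alpha> i = \<beta> i)"
    by blast
qed

definition scrambled_set :: "'a set" where
  "scrambled_set = (\<Union>m. range (point m))"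

lemma sigma_cantor_scrambled_set: "sigma_cantor_set scrambled_set"
  unfolding sigma_cantor_set_def scrambled_set_def
  using cantor_set_range_cantor_embedding[OF cantor_embedding_point]
  by (intro exI[of _ "\<lambda>m. range (point m)"]) simp

lemma dense_scrambled_set: "closure scrambled_set = UNIV"
proof -
  have "\<exists>y\<in>scrambled_set. dist y x < \<epsilon>" if "0 < \<epsilon>" for x \<epsilon>
  proof -
    obtain m where "K (m, []) \<subseteq> ball x \<epsilon>"
      using roots_dense[of "ball x \<epsilon>"] \<open>0 < \<epsilon>\<close> by auto
    moreover have "point m \<alpha> \<in> K (m, [])" for \<alpha>
      using point_mem_K[of m \<alpha> 0] by simp
    ultimately show ?thesis
      unfolding scrambled_set_def by (metis UNIV_I UN_I dist_commute mem_ball rangeI subsetD)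
  qed
  then have "x \<in> closure scrambled_set" for x
    unfolding closure_approachable by blast
  then show ?thesis by blast
qed

lemma point_mem_level:
  assumes "m \<le> n"
  shows "point m \<alpha> \<in> K (m, map \<alpha> [0..<n - m])" "level (m, map \<alpha> [0..<n - m]) = n"
  using assms point_mem_K by simp_all

lemma eventually_branches_differ:
  assumes "point m \<alpha> \<noteq> point m' \<beta>"
  shows "\<forall>\<^sub>F n in sequentially. (m, map \<alpha> [0..<n - m]) \<noteq> (m', map \<beta> [0..<n - m'])"
proof (cases "m = m'")
  case True
  with assms have "\<alpha> \<noteq> \<beta>" by blast
  then obtain l where "\<alpha> l \<noteq> \<beta> l" by blast
  then have "map \<alpha> [0..<n - m] \<noteq> map \<beta> [0..<n - m]" if "Suc (m + l) \<le> n" for n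
    using that by (auto simp: map_eq_conv)
  with True show ?thesis
    unfolding eventually_sequentially by blast
qed simp

lemma tendsto_dist_points:
  "(\<lambda>n. dist ((f^^p n) (point m \<alpha>)) ((f^^p n) (point m' \<beta>))) \<longlonglongrightarrow> 0"
proof -
  have "\<forall>\<^sub>F n in sequentially.
      norm (dist ((f^^p (Suc n)) (point m \<alpha>)) ((f^^p (Suc n)) (point m' \<beta>))) \<le> inverse (real (Suc n))"
    unfolding eventually_sequentially
  proof (intro exI allI impI)
    fix n assume "max m m' \<le> n"
    then have "m \<le> Suc n" "m' \<le> Suc n" by auto
    have "dist ((f^^p (Suc n)) (point m \<alpha>)) ((f^^p (Suc n)) (point m' \<beta>)) < inverse (real (Suc n))"
      by (rule proximal[OF point_mem_level(2)[OF \<open>m \<le> Suc n\<close>] point_mem_level(2)[OF \<open>m' \<le> Suc n\<close>]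
            point_mem_level(1)[OF \<open>m \<le> Suc n\<close>] point_mem_level(1)[OF \<open>m' \<le> Suc n\<close>]])
    then show "norm (dist ((f^^p (Suc n)) (point m \<alpha>)) ((f^^p (Suc n)) (point m' \<beta>)))
        \<le> inverse (real (Suc n))" by simp
  qed
  then have "(\<lambda>n. dist ((f^^p (Suc n)) (point m \<alpha>)) ((f^^p (Suc n)) (point m' \<beta>))) \<longlonglongrightarrow> 0"
    using LIMSEQ_inverse_real_of_nat by (rule Lim_null_comparison)
  then show ?thesis
    by (rule LIMSEQ_imp_Suc)
qed

lemma filterlim_dist_points:
  assumes "point m \<alpha> \<noteq> point m' \<beta>"
  shows "filterlim (\<lambda>n. dist ((f^^q n) (point m \<alpha>)) ((f^^q n) (point m' \<beta>))) at_top sequentially"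
proof -
  have "\<forall>\<^sub>F n in sequentially. max m m' \<le> n"
    by (rule eventually_ge_at_top)
  moreover have "\<forall>\<^sub>F n in sequentially. (m, map \<alpha> [0..<Suc n - m]) \<noteq> (m', map \<beta> [0..<Suc n - m'])"
    using eventually_branches_differ[OF assms] by (rule eventually_sequentially_Suc[THEN iffD2])
  ultimately have "\<forall>\<^sub>F n in sequentially.
      real n \<le> dist ((f^^q (Suc n)) (point m \<alpha>)) ((f^^q (Suc n)) (point m' \<beta>))"
  proof eventually_elim
    case (elim n)
    then have "m \<le> Suc n" "m' \<le> Suc n" by auto
    have "real (Suc n) < dist ((f^^q (Suc n)) (point m \<alpha>)) ((f^^q (Suc n)) (point m' \<beta>))"
      by (rule distal[OF point_mem_level(2)[OF \<open>m \<le> Suc n\<close>] point_mem_level(2)[OF \<open>m' \<le> Suc n\<close>]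
            elim(2) point_mem_level(1)[OF \<open>m \<le> Suc n\<close>] point_mem_level(1)[OF \<open>m' \<le> Suc n\<close>]])
    then show ?case by simp
  qed
  then have "filterlim (\<lambda>n. dist ((f^^q (Suc n)) (point m \<alpha>)) ((f^^q (Suc n)) (point m' \<beta>)))
      at_top sequentially"
    by (rule filterlim_at_top_mono[OF filterlim_real_sequentially])
  then show ?thesis
    by (rule filterlim_sequentially_Suc[THEN iffD1])
qed

lemma unif_LY_scrambled_set: "unif_LY_scrambled f scrambled_set"
  unfolding unif_LY_scrambled_def
proof (intro conjI)
  have "point 0 (\<lambda>_. True) \<noteq> point 0 (\<lambda>_. False)"
    using inj_eq[OF cantor_embedding_inj[OF cantor_embedding_point]] by (metis (full_types))
  then show "\<exists>x\<in>scrambled_set. \<exists>y\<in>scrambled_set. x \<noteq> y"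
    unfolding scrambled_set_def by blast
  show "\<exists>p q. \<forall>x\<in>scrambled_set. \<forall>y\<in>scrambled_set. x \<noteq> y \<longrightarrow>
          ((\<lambda>n. dist ((f ^^ p n) x) ((f ^^ p n) y)) \<longlonglongrightarrow> 0) \<and>
          filterlim (\<lambda>n. dist ((f ^^ q n) x) ((f ^^ q n) y)) at_top sequentially"
    unfolding scrambled_set_def using tendsto_dist_points filterlim_dist_points by blast
qed

end

section \<open>Construction of a scheme\<close>

lemma level_Suc_cases:
  assumes "level a = Suc n"
  obtains "a = (Suc n, [])" | m s t where "a = (m, s @ [t])" "level (m, s) = n"
proof -
  obtain m s where a: "a = (m, s)" by (cases a)
  show ?thesis
  proof (cases s rule: rev_exhaust)
    case Nil
    then show ?thesis using that(1) assms a by simp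
  next
    case (snoc s' t)
    then show ?thesis using that(2)[of m s' t] assms a by simp
  qed
qed

lemma finite_level: "finite {a. level a = n}"
proof (rule finite_subset)
  show "{a. level a = n} \<subseteq> {..n} \<times> {s. set s \<subseteq> UNIV \<and> length s \<le> n}"
    by auto
  show "finite ({..n} \<times> {s :: bool list. set s \<subseteq> UNIV \<and> length s \<le> n})"
    by (intro finite_cartesian_product finite_lists_length_le) auto
qed

lemma two_le_card_level_Suc: "2 \<le> card {a. level a = Suc n}"
proof -
  have "{(Suc n, []), (0, replicate (Suc n) True)} \<subseteq> {a. level a = Suc n}"
    by auto
  from card_mono[OF finite_level this] show ?thesis by simp
qed

record 'a scheme_stage =
  centre :: "nat \<times> bool list \<Rightarrow> 'a"
  radius :: "nat \<times> bool list \<Rightarrow> real"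
  prox_time :: nat
  dist_time :: nat

definition admissible_stage :: "(nat \<Rightarrow> 'a::metric_space) \<Rightarrow> (nat \<Rightarrow> real) \<Rightarrow> nat \<Rightarrow> 'a scheme_stage \<Rightarrow> bool"
  where "admissible_stage c r n st \<longleftrightarrow>
    (\<forall>a. level a = n \<longrightarrow> 0 < radius st a \<and> radius st a \<le> 1 / 2 ^ Suc n) \<and>
    cball (centre st (n, [])) (radius st (n, [])) \<subseteq> ball (c n) (r n)"

definition refining_stage :: "('a::metric_space \<Rightarrow> 'a) \<Rightarrow> nat \<Rightarrow> 'a scheme_stage \<Rightarrow> 'a scheme_stage \<Rightarrow> bool"
  where "refining_stage f n st st' \<longleftrightarrow>
    (\<forall>m s t. level (m, s) = n \<longrightarrow>
       cball (centre st' (m, s @ [t])) (radius st' (m, s @ [t])) \<subseteq> ball (centre st (m, s)) (radius st (m, s))) \<and>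
    (\<forall>a b u v. level a = Suc n \<longrightarrow> level b = Suc n \<longrightarrow>
       u \<in> cball (centre st' a) (radius st' a) \<longrightarrow> v \<in> cball (centre st' b) (radius st' b) \<longrightarrow>
       dist ((f^^prox_time st') u) ((f^^prox_time st') v) < inverse (real (Suc n)) \<and>
       (a \<noteq> b \<longrightarrow> real (Suc n) < dist ((f^^dist_time st') u) ((f^^dist_time st') v)))"

definition target_ball :: "(nat \<Rightarrow> 'a::metric_space) \<Rightarrow> (nat \<Rightarrow> real) \<Rightarrow> 'a scheme_stage \<Rightarrow>
    nat \<times> bool list \<Rightarrow> 'a set" where
  "target_ball c r st a = (if snd a = [] then ball (c (fst a)) (r (fst a))
    else ball (centre st (fst a, butlast (snd a))) (radius st (fst a, butlast (snd a))))"

lemma target_ball_root [simp]: "target_ball c r st (m, []) = ball (c m) (r m)"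
  and target_ball_snoc [simp]: "target_ball c r st (m, s @ [t]) = ball (centre st (m, s)) (radius st (m, s))"
  unfolding target_ball_def by simp_all

lemma exists_refining_stage:
  fixes f :: "'a::metric_space \<Rightarrow> 'a"
  assumes dense: "\<And>k. 2 \<le> k \<Longrightarrow> dense_in_power k (Prox k f) \<and> dense_in_power k (Dk k f)"
    and cont: "continuous_on UNIV f" and r: "0 < r (Suc n)"
    and st: "admissible_stage c r n st"
  shows "\<exists>st'. admissible_stage c r (Suc n) st' \<and> refining_stage f n st st'"
proof -
  define U where "U = target_ball c r st"
  have "open (U a) \<and> U a \<noteq> {}" if "level a = Suc n" for a
    using that
  proof (cases rule: level_Suc_cases)
    case 1
    then show ?thesis using r unfolding U_def by auto
  next
    case (2 m s t)
    then have "0 < radius st (m, s)"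
      using st unfolding admissible_stage_def by blast
    with 2 show ?thesis unfolding U_def by auto
  qed
  then have U: "\<And>a. a \<in> {a. level a = Suc n} \<Longrightarrow> open (U a)"
    "\<And>a. a \<in> {a. level a = Suc n} \<Longrightarrow> U a \<noteq> {}" by auto
  have "0 < inverse (real (Suc n))" "0 < (1::real) / 2 ^ Suc (Suc n)" by simp_all
  note balls = exists_scrambling_balls[where U=U and I="{a. level a = Suc n}" and R="real (Suc n)",
      OF dense cont two_le_card_level_Suc U this, unfolded mem_Collect_eq]
  show ?thesis
  proof (rule balls)
    fix \<rho> x p q
    assume \<rho>: "\<And>a. level a = Suc n \<Longrightarrow> 0 < \<rho> a \<and> \<rho> a \<le> 1 / 2 ^ Suc (Suc n)"
      and sub: "\<And>a. level a = Suc n \<Longrightarrow> cball (x a) (\<rho> a) \<subseteq> U a"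
      and close: "\<And>a b u v. \<lbrakk>level a = Suc n; level b = Suc n; u \<in> cball (x a) (\<rho> a);
          v \<in> cball (x b) (\<rho> b)\<rbrakk> \<Longrightarrow> dist ((f^^p) u) ((f^^p) v) < inverse (real (Suc n))"
      and far: "\<And>a b u v. \<lbrakk>level a = Suc n; level b = Suc n; a \<noteq> b;
          u \<in> cball (x a) (\<rho> a); v \<in> cball (x b) (\<rho> b)\<rbrakk> \<Longrightarrow> real (Suc n) < dist ((f^^q) u) ((f^^q) v)"
    define st' where "st' = \<lparr>centre = x, radius = \<rho>, prox_time = p, dist_time = q\<rparr>"
    have sel: "centre st' = x" "radius st' = \<rho>" "prox_time st' = p" "dist_time st' = q"
      unfolding st'_def by simp_all
    have "admissible_stage c r (Suc n) st'"
      unfolding admissible_stage_def sel using \<rho> sub[of "(Suc n, [])"] unfolding U_def by simp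
    moreover have "refining_stage f n st st'"
      unfolding refining_stage_def sel
    proof (intro conjI allI impI)
      show "cball (x (m, s @ [t])) (\<rho> (m, s @ [t])) \<subseteq> ball (centre st (m, s)) (radius st (m, s))"
        if "level (m, s) = n" for m s t
        using sub[of "(m, s @ [t])"] that unfolding U_def by simp
      show "dist ((f^^p) u) ((f^^p) v) < inverse (real (Suc n))"
        if "level a = Suc n" "level b = Suc n" "u \<in> cball (x a) (\<rho> a)" "v \<in> cball (x b) (\<rho> b)"
        for a b u v
        using close that .
      show "real (Suc n) < dist ((f^^q) u) ((f^^q) v)"
        if "level a = Suc n" "level b = Suc n" "u \<in> cball (x a) (\<rho> a)" "v \<in> cball (x b) (\<rho> b)" "a \<noteq> b"
        for a b u v
        using far that by blast
    qed
    ultimately show ?thesis by blast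
  qed
qed

lemma ball_pi_base_of_countable_dense:
  fixes D :: "'a::metric_space set"
  assumes "countable D" "closure D = UNIV"
  obtains c :: "nat \<Rightarrow> 'a" and r :: "nat \<Rightarrow> real"
  where "\<And>m. 0 < r m" "\<And>U. open U \<Longrightarrow> U \<noteq> {} \<Longrightarrow> \<exists>m. ball (c m) (r m) \<subseteq> U"
proof
  have "D \<noteq> {}" using assms(2) by auto
  define c where "c m = from_nat_into D (fst (prod_decode m))" for m
  define r where "r m = inverse (real (Suc (snd (prod_decode m))))" for m
  show "0 < r m" for m unfolding r_def by simp
  show "\<exists>m. ball (c m) (r m) \<subseteq> U" if "open U" "U \<noteq> {}" for U
  proof -
    obtain x \<epsilon> where "0 < \<epsilon>" "ball x \<epsilon> \<subseteq> U"
      using \<open>open U\<close> \<open>U \<noteq> {}\<close> open_contains_ball by blast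
    obtain d where "d \<in> D" "dist d x < \<epsilon> / 2"
      using assms(2) \<open>0 < \<epsilon>\<close> closure_approachable[of x D] by (metis UNIV_I half_gt_zero)
    obtain j where j: "from_nat_into D j = d"
      using from_nat_into_surj[OF assms(1) \<open>d \<in> D\<close>] by blast
    obtain k where k: "inverse (real (Suc k)) < \<epsilon> / 2"
      using reals_Archimedean[of "\<epsilon> / 2"] \<open>0 < \<epsilon>\<close> by auto
    have "ball (c (prod_encode (j, k))) (r (prod_encode (j, k))) \<subseteq> ball x \<epsilon>"
    proof
      fix z assume "z \<in> ball (c (prod_encode (j, k))) (r (prod_encode (j, k)))"
      then have "dist d z < \<epsilon> / 2"
        using k j unfolding c_def r_def by simp
      with \<open>dist d x < \<epsilon> / 2\<close> show "z \<in> ball x \<epsilon>"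
        using dist_triangle[of x z d] by (simp add: dist_commute)
    qed
    with \<open>ball x \<epsilon> \<subseteq> U\<close> show ?thesis by blast
  qed
qed

lemma LY_cantor_scheme_of_stages:
  fixes f :: "'a::{metric_space, complete_space} \<Rightarrow> 'a"
  assumes cont: "continuous_on UNIV f"
    and balls_dense: "\<And>U. open U \<Longrightarrow> U \<noteq> {} \<Longrightarrow> \<exists>m. ball (c m) (r m) \<subseteq> U"
    and S: "\<And>n. admissible_stage c r n (S n) \<and> refining_stage f n (S n) (S (Suc n))"
  shows "LY_cantor_scheme f (\<lambda>a. cball (centre (S (level a)) a) (radius (S (level a)) a))
    (\<lambda>n. prox_time (S n)) (\<lambda>n. dist_time (S n))"
proof -
  define K where "K = (\<lambda>a. cball (centre (S (level a)) a) (radius (S (level a)) a))"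
  have K: "K a = cball (centre (S (level a)) a) (radius (S (level a)) a)" for a
    unfolding K_def ..
  have radius: "0 < radius (S (level a)) a \<and> radius (S (level a)) a \<le> 1 / 2 ^ Suc (level a)" for a
    using S[of "level a"] unfolding admissible_stage_def by blast
  have "LY_cantor_scheme f K (\<lambda>n. prox_time (S n)) (\<lambda>n. dist_time (S n))"
  proof
    show "closed (K a)" for a unfolding K by simp
    show "K a \<noteq> {}" for a unfolding K using radius[of a] by auto
    show "dist u v \<le> 1 / 2 ^ length s" if "u \<in> K (m, s)" "v \<in> K (m, s)" for u v m s
    proof -
      let ?a = "(m, s)"
      have "dist u v \<le> 2 * radius (S (level ?a)) ?a"
        using that dist_triangle[of u v "centre (S (level ?a)) ?a"] unfolding K
        by (simp add: dist_commute)
      also have "\<dots> \<le> 1 / 2 ^ level ?a"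
        using radius[of ?a] by simp
      also have "\<dots> \<le> 1 / 2 ^ length s"
        by (intro divide_left_mono power_increasing) auto
      finally show ?thesis .
    qed
    show "K (m, s @ [t]) \<subseteq> K (m, s)" for m s t
    proof -
      let ?n = "level (m, s)"
      have "cball (centre (S (Suc ?n)) (m, s @ [t])) (radius (S (Suc ?n)) (m, s @ [t]))
          \<subseteq> ball (centre (S ?n) (m, s)) (radius (S ?n) (m, s))"
        using S[of ?n] unfolding refining_stage_def by blast
      moreover have "level (m, s @ [t]) = Suc ?n" by simp
      ultimately show ?thesis
        unfolding K using ball_subset_cball by (metis subset_trans)
    qed
    show "\<exists>m. K (m, []) \<subseteq> U" if U: "open U" "U \<noteq> {}" for U
    proof -
      obtain m where "ball (c m) (r m) \<subseteq> U"
        using balls_dense[OF U] by blast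
      moreover have "cball (centre (S m) (m, [])) (radius (S m) (m, [])) \<subseteq> ball (c m) (r m)"
        using S[of m] unfolding admissible_stage_def by blast
      ultimately have "K (m, []) \<subseteq> U"
        unfolding K by simp
      then show ?thesis by blast
    qed
    fix a b n u v
    assume "level a = Suc n" "level b = Suc n" "u \<in> K a" "v \<in> K b"
    then have "level a = Suc n" "level b = Suc n"
      "u \<in> cball (centre (S (Suc n)) a) (radius (S (Suc n)) a)"
      "v \<in> cball (centre (S (Suc n)) b) (radius (S (Suc n)) b)"
      unfolding K by simp_all
    then have "dist ((f^^prox_time (S (Suc n))) u) ((f^^prox_time (S (Suc n))) v) < inverse (real (Suc n)) \<and>
        (a \<noteq> b \<longrightarrow> real (Suc n) < dist ((f^^dist_time (S (Suc n))) u) ((f^^dist_time (S (Suc n))) v))"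
      using S[of n] unfolding refining_stage_def by blast
    then show "dist ((f^^prox_time (S (Suc n))) u) ((f^^prox_time (S (Suc n))) v) < inverse (real (Suc n))"
      "a \<noteq> b \<Longrightarrow> real (Suc n) < dist ((f^^dist_time (S (Suc n))) u) ((f^^dist_time (S (Suc n))) v)"
      by simp_all
  qed (rule cont)
  then show ?thesis unfolding K_def .
qed

lemma exists_LY_cantor_scheme:
  fixes f :: "'a::{metric_space, complete_space} \<Rightarrow> 'a"
  assumes separable: "\<exists>D::'a set. countable D \<and> closure D = UNIV"
    and cont: "continuous_on UNIV f"
    and dense: "\<And>k. 2 \<le> k \<Longrightarrow> dense_in_power k (Prox k f) \<and> dense_in_power k (Dk k f)"
  shows "\<exists>K p q. LY_cantor_scheme f K p q"
proof -
  obtain c :: "nat \<Rightarrow> 'a" and r where r: "\<And>m. 0 < r m"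
    and balls_dense: "\<And>U. open U \<Longrightarrow> U \<noteq> {} \<Longrightarrow> \<exists>m. ball (c m) (r m) \<subseteq> U"
    using separable ball_pi_base_of_countable_dense by metis
  have "admissible_stage c r 0
      \<lparr>centre = \<lambda>_. c 0, radius = \<lambda>_. min (r 0 / 2) (1 / 2), prox_time = 0, dist_time = 0\<rparr>"
    unfolding admissible_stage_def using r[of 0] by (auto intro!: cball_subset_ball_iff[THEN iffD2])
  moreover have "\<exists>st'. admissible_stage c r (Suc n) st' \<and> refining_stage f n st st'"
    if "admissible_stage c r n st" for n st
    using exists_refining_stage[OF dense cont r that] .
  ultimately obtain S where "\<And>n. admissible_stage c r n (S n) \<and> refining_stage f n (S n) (S (Suc n))"
    using dependent_nat_choice[of "admissible_stage c r" "refining_stage f"] by blast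
  from LY_cantor_scheme_of_stages[OF cont balls_dense this] show ?thesis by blast
qed

lemma uncountable_sigma_cantor_set:
  assumes "sigma_cantor_set S"
  shows "uncountable S"
proof -
  obtain C where "cantor_set C" "C \<subseteq> S"
    using assms unfolding sigma_cantor_set_def by blast
  then show ?thesis
    using uncountable_cantor_set countable_subset by blast
qed

theorem theorem2p3:
  fixes f :: "'a::{metric_space, complete_space} \<Rightarrow> 'a"
  assumes separable: "\<exists>D::'a set. countable D \<and> closure D = UNIV"
    and no_isolated: "\<And>x::'a. x islimpt UNIV"
    and cont: "continuous_on UNIV f"
  shows "((\<exists>S. closure S = UNIV \<and> unif_LY_scrambled f S) \<longleftrightarrow> densely_unif_LY_chaotic f)
       \<and> ((\<exists>S. closure S = UNIV \<and> unif_LY_scrambled f S) \<longleftrightarrow>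
            (\<exists>S. closure S = UNIV \<and> sigma_cantor_set S \<and> unif_LY_scrambled f S))
       \<and> ((\<exists>S. closure S = UNIV \<and> unif_LY_scrambled f S) \<longleftrightarrow>
            (\<forall>k\<ge>2. dense_in_power k (Prox k f) \<and> dense_in_power k (Dk k f)))"
proof -
  let ?dense_scrambled = "\<exists>S. closure S = UNIV \<and> unif_LY_scrambled f S"
  let ?sigma_cantor = "\<exists>S. closure S = UNIV \<and> sigma_cantor_set S \<and> unif_LY_scrambled f S"
  let ?Prox_Dk = "\<forall>k\<ge>2. dense_in_power k (Prox k f) \<and> dense_in_power k (Dk k f)"
  have "?dense_scrambled \<Longrightarrow> ?Prox_Dk"
    using dense_scrambled_imp_dense_Prox_Dk[OF _ _ no_isolated] by blast
  moreover have "?Prox_Dk \<Longrightarrow> ?sigma_cantor"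
  proof -
    assume ?Prox_Dk
    then obtain K p q where "LY_cantor_scheme f K p q"
      using exists_LY_cantor_scheme[OF separable cont] by blast
    then interpret LY_cantor_scheme f K p q .
    show ?sigma_cantor
      using dense_scrambled_set sigma_cantor_scrambled_set unif_LY_scrambled_set by blast
  qed
  moreover have "?sigma_cantor \<Longrightarrow> densely_unif_LY_chaotic f"
    unfolding densely_unif_LY_chaotic_def using uncountable_sigma_cantor_set by blast
  moreover have "densely_unif_LY_chaotic f \<Longrightarrow> ?dense_scrambled"
    unfolding densely_unif_LY_chaotic_def by blast
  ultimately show ?thesis by blast
qed

end
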